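(* Let $((\beta_\ell,B_\ell))_{\ell\ge1}$ be a sequence with $\beta_\ell$ and $B_\ell$ non-increasing, $\beta_\ell\ge\beta_c$, $B_\ell>0$, $\beta_\ell\searrow\beta_c$ and $B_\ell\searrow0$. Then $\lim_{\ell\to\infty}z^*(\beta_\ell,B_\ell)=0$. In particular $\lim_{B\searrow0}z^*(\beta_c,B)=0$ and $\lim_{\beta\searrow\beta_c}z^*(\beta,0^+)=0$, where $z^*(\beta,0^+)=\lim_{B\searrow0}z^*(\beta,B)$.
   Context: $W\ge0$ is a random variable with $\mathbb E[W^2]<\infty$ and $\mathbb E[W]>0$; $\nu=\mathbb E[W^2]/\mathbb E[W]$, $\beta_c={\rm asinh}(1/\nu)$, $\alpha(\beta)=\sqrt{\sinh(\beta)/\mathbb E[W]}$. For $B>0$, $z^*(\beta,B)$ denotes the unique positive solution $z$ of $z=\mathbb E[\tanh(\alpha(\beta)Wz+B)\,\alpha(\beta)W]$; it is non-negative and monotone (non-decreasing) in $\beta$ and $B$. *)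

theory Defs
  imports "HOL-Probability.Probability"
begin

definition EW :: "'a measure \<Rightarrow> ('a \<Rightarrow> real) \<Rightarrow> real" where
  "EW M W = (\<integral>x. W x \<partial>M)"

definition nu :: "'a measure \<Rightarrow> ('a \<Rightarrow> real) \<Rightarrow> real" where
  "nu M W = (\<integral>x. (W x)\<^sup>2 \<partial>M) / EW M W"

definition betac :: "'a measure \<Rightarrow> ('a \<Rightarrow> real) \<Rightarrow> real" where
  "betac M W = arsinh (1 / nu M W)"

definition alpha :: "'a measure \<Rightarrow> ('a \<Rightarrow> real) \<Rightarrow> real \<Rightarrow> real" where
  "alpha M W \<beta> = sqrt (sinh \<beta> / EW M W)"

definition zstar :: "'a measure \<Rightarrow> ('a \<Rightarrow> real) \<Rightarrow> real \<Rightarrow> real \<Rightarrow> real" where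
  "zstar M W \<beta> B = (THE z. z > 0 \<and>
      z = (\<integral>x. tanh (alpha M W \<beta> * W x * z + B) * (alpha M W \<beta> * W x) \<partial>M))"

definition zstar0 :: "'a measure \<Rightarrow> ('a \<Rightarrow> real) \<Rightarrow> real \<Rightarrow> real" where
  "zstar0 M W \<beta> = Lim (at_right 0) (\<lambda>B. zstar M W \<beta> B)"

end

theory Submission
  imports Defs
begin

text \<open>
  Concavity of \<open>tanh\<close> on \<open>[0, \<infinity>)\<close> makes \<open>E[tanh(aWz + B) aW] / z\<close> strictly decreasing in \<open>z\<close>,
  so the positive fixed point \<open>z*\<close> is unique and increasing in \<open>B\<close>.
  At a fixed point \<open>z \<ge> \<epsilon>\<close>, the bound \<open>tanh(u + B) \<le> u + B - (u - tanh u)\<close> and the monotonicity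
  of \<open>u - tanh u\<close> give \<open>\<delta>(\<epsilon>) \<le> (a\<^sup>2 E[W\<^sup>2] - 1) z + B a E[W]\<close>, where
  \<open>\<delta>(\<epsilon>) = E[a\<^sub>c W (a\<^sub>c W \<epsilon> - tanh(a\<^sub>c W \<epsilon>))] > 0\<close> only depends on \<open>\<epsilon>\<close> and \<open>a\<^sub>c = \<alpha>(\<beta>\<^sub>c)\<close>.
  Since \<open>a\<^sub>c\<^sup>2 E[W\<^sup>2] = 1\<close> and \<open>z \<le> a E[W]\<close> stays bounded, the right-hand side tends to \<open>0\<close>
  as \<open>\<beta> \<searrow> \<beta>\<^sub>c\<close> and \<open>B \<searrow> 0\<close>, so eventually \<open>z* < \<epsilon>\<close>.
  The limit in \<open>\<beta>\<close> follows from \<open>0 \<le> z*(\<beta>, 0+) \<le> z*(\<beta>, \<beta> - \<beta>\<^sub>c)\<close>.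
\<close>

lemma x_minus_tanh_mono:
  fixes x y :: real assumes "x \<le> y" shows "x - tanh x \<le> y - tanh y"
proof -
  have "(\<lambda>t. t - tanh t) x \<le> (\<lambda>t. t - tanh t) y"
    by (rule DERIV_nonneg_imp_increasing_open[OF assms], rule exI[of _ "tanh _ ^ 2"])
      (auto intro!: derivative_eq_intros continuous_intros)
  then show ?thesis by simp
qed

lemma x_minus_tanh_strict_mono:
  fixes x y :: real assumes "0 \<le> x" "x < y" shows "x - tanh x < y - tanh y"
proof -
  have "(\<lambda>t. t - tanh t) x < (\<lambda>t. t - tanh t) y"
    by (rule DERIV_pos_imp_increasing_open[OF assms(2)], rule exI[of _ "tanh _ ^ 2"])
      (use assms in \<open>auto intro!: derivative_eq_intros continuous_intros\<close>)
  then show ?thesis by simp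
qed

lemma tanh_less_self: "0 < x \<Longrightarrow> tanh x < (x::real)"
  using x_minus_tanh_strict_mono[of 0 x] by simp

lemma tanh_le_self: "0 \<le> x \<Longrightarrow> tanh x \<le> (x::real)"
  using x_minus_tanh_mono[of 0 x] by simp

lemma abs_tanh_diff_le: "\<bar>tanh y - tanh x\<bar> \<le> \<bar>y - (x::real)\<bar>"
  using x_minus_tanh_mono[of x y] x_minus_tanh_mono[of y x]
  by (cases "x \<le> y") (auto simp: abs_if)

lemma convex_on_uminus_tanh: "convex_on {0..} (\<lambda>x::real. - tanh x)"
  by (rule convex_on_realI[where f'="\<lambda>x. tanh x ^ 2 - 1"])
    (auto intro!: derivative_eq_intros simp: power_mono)

lemma tanh_affine_ratio_less:
  fixes a B z1 z2 :: real
  assumes "a \<ge> 0" "B > 0" "0 < z1" "z1 < z2"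
  shows "z1 * tanh (a * z2 + B) < z2 * tanh (a * z1 + B)"
proof -
  define t where "t = z1 / z2"
  have t: "0 \<le> t" "t \<le> 1" using assms by (auto simp: t_def)
  have interpolate: "(1 - t) * B + t * (a * z2 + B) = a * z1 + B"
    using assms by (simp add: t_def field_simps)
  have "- tanh ((1 - t) * B + t * (a * z2 + B)) \<le> (1 - t) * - tanh B + t * - tanh (a * z2 + B)"
    using convex_onD[OF convex_on_uminus_tanh, of t B "a * z2 + B"] t assms by auto
  then have "(1 - t) * tanh B + t * tanh (a * z2 + B) \<le> tanh (a * z1 + B)"
    using interpolate by simp
  moreover have "(1 - t) * tanh B > 0" using assms by (simp add: t_def)
  ultimately have "z2 * (t * tanh (a * z2 + B)) < z2 * tanh (a * z1 + B)"
    using assms by simp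
  then show ?thesis using assms by (simp add: t_def)
qed

definition mean_field_map :: "'a measure \<Rightarrow> ('a \<Rightarrow> real) \<Rightarrow> real \<Rightarrow> real \<Rightarrow> real \<Rightarrow> real" where
  "mean_field_map M W a B z = (\<integral>x. tanh (a * W x * z + B) * (a * W x) \<partial>M)"

definition tanh_gap :: "'a measure \<Rightarrow> ('a \<Rightarrow> real) \<Rightarrow> real \<Rightarrow> real \<Rightarrow> real" where
  "tanh_gap M W a \<epsilon> = (\<integral>x. a * W x * (a * W x * \<epsilon> - tanh (a * W x * \<epsilon>)) \<partial>M)"

locale weight_rv = prob_space M for M :: "'a measure" +
  fixes W :: "'a \<Rightarrow> real"
  assumes W_measurable[measurable]: "W \<in> borel_measurable M"
    and W_nonneg: "AE x in M. W x \<ge> 0"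
    and integrable_W_sq: "integrable M (\<lambda>x. (W x)\<^sup>2)"
    and EW_pos: "EW M W > 0"
begin

lemma integrable_W: "integrable M W"
  using square_integrable_imp_integrable[OF W_measurable integrable_W_sq] .

lemma integrable_mean_field_integrand: "integrable M (\<lambda>x. tanh (a * W x * z + B) * (a * W x))"
proof (rule Bochner_Integration.integrable_bound[where f="\<lambda>x. a * W x"])
  show "integrable M (\<lambda>x. a * W x)" using integrable_W by simp
  show "AE x in M. norm (tanh (a * W x * z + B) * (a * W x)) \<le> norm (a * W x)"
  proof (rule AE_I2)
    fix x
    have "\<bar>tanh (a * W x * z + B)\<bar> \<le> 1" using tanh_real_bounds[of "a * W x * z + B"] by auto
    then show "norm (tanh (a * W x * z + B) * (a * W x)) \<le> norm (a * W x)"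
      by (simp add: abs_mult mult_left_le_one_le)
  qed
  show "(\<lambda>x. tanh (a * W x * z + B) * (a * W x)) \<in> borel_measurable M"
    by (intro borel_measurable_times borel_measurable_continuous_on[where f=tanh] continuous_intros) auto
qed

lemma emeasure_W_pos_ne_0: "emeasure M {x\<in>space M. W x > 0} \<noteq> 0"
proof
  assume "emeasure M {x\<in>space M. W x > 0} = 0"
  then have "AE x in M. \<not> W x > 0"
    by (intro AE_I[where N="{x\<in>space M. W x > 0}"]) auto
  then have "AE x in M. W x = 0" using W_nonneg by eventually_elim auto
  then have "EW M W = 0" unfolding EW_def by (simp add: integral_eq_zero_AE)
  then show False using EW_pos by simp
qed

lemma second_moment_pos: "(\<integral>x. (W x)\<^sup>2 \<partial>M) > 0"
proof -
  have "(\<integral>x. (W x)\<^sup>2 \<partial>M) \<noteq> 0"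
  proof
    assume "(\<integral>x. (W x)\<^sup>2 \<partial>M) = 0"
    then have "AE x in M. W x = 0" using integral_nonneg_eq_0_iff_AE[OF integrable_W_sq] by simp
    then have "EW M W = 0" unfolding EW_def by (simp add: integral_eq_zero_AE)
    then show False using EW_pos by simp
  qed
  moreover have "(\<integral>x. (W x)\<^sup>2 \<partial>M) \<ge> 0" by simp
  ultimately show ?thesis by linarith
qed

lemma mean_field_map_ratio_less:
  assumes "a > 0" "B > 0" "0 < z1" "z1 < z2"
  shows "z1 * mean_field_map M W a B z2 < z2 * mean_field_map M W a B z1"
proof -
  have pointwise_le: "z1 * (tanh (a * W x * z2 + B) * (a * W x)) \<le> z2 * (tanh (a * W x * z1 + B) * (a * W x))"
    if "W x \<ge> 0" for x
    using mult_right_mono[OF less_imp_le[OF tanh_affine_ratio_less[of "a * W x" B z1 z2]], of "a * W x"]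
      assms that by (simp add: mult_ac)
  have pointwise_less: "z1 * (tanh (a * W x * z2 + B) * (a * W x)) < z2 * (tanh (a * W x * z1 + B) * (a * W x))"
    if "W x > 0" for x
    using mult_strict_right_mono[OF tanh_affine_ratio_less[of "a * W x" B z1 z2], of "a * W x"]
      assms that by (simp add: mult_ac)
  have "(\<integral>x. z1 * (tanh (a * W x * z2 + B) * (a * W x)) \<partial>M)
      < (\<integral>x. z2 * (tanh (a * W x * z1 + B) * (a * W x)) \<partial>M)"
  proof (rule integral_less_AE[OF _ _ emeasure_W_pos_ne_0])
    show "AE x in M. x \<in> {x\<in>space M. W x > 0} \<longrightarrow>
        z1 * (tanh (a * W x * z2 + B) * (a * W x)) \<noteq> z2 * (tanh (a * W x * z1 + B) * (a * W x))"
      using pointwise_less by (intro AE_I2) (metis less_irrefl mem_Collect_eq)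
    show "AE x in M. z1 * (tanh (a * W x * z2 + B) * (a * W x)) \<le> z2 * (tanh (a * W x * z1 + B) * (a * W x))"
      using W_nonneg by eventually_elim (rule pointwise_le)
  qed (auto intro: integrable_mean_field_integrand)
  then show ?thesis unfolding mean_field_map_def by simp
qed

lemma mean_field_map_le: assumes "a \<ge> 0" shows "mean_field_map M W a B z \<le> a * EW M W"
proof -
  have "mean_field_map M W a B z \<le> (\<integral>x. a * W x \<partial>M)"
    unfolding mean_field_map_def
  proof (rule integral_mono_AE[OF integrable_mean_field_integrand])
    show "integrable M (\<lambda>x. a * W x)" using integrable_W by simp
    show "AE x in M. tanh (a * W x * z + B) * (a * W x) \<le> a * W x"
      using W_nonneg
    proof eventually_elim
      case (elim x)
      then show ?case
        using mult_right_mono[OF less_imp_le[OF tanh_real_lt_1], of "a * W x"] assms by simp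
    qed
  qed
  then show ?thesis using integrable_W by (simp add: EW_def)
qed

lemma mean_field_map_at_0: "mean_field_map M W a B 0 = tanh B * a * EW M W"
  unfolding mean_field_map_def EW_def using integrable_W by simp

lemma mean_field_map_lipschitz:
  assumes "a \<ge> 0"
  shows "mean_field_map M W a B z - mean_field_map M W a B z' \<le> a\<^sup>2 * (\<integral>x. (W x)\<^sup>2 \<partial>M) * \<bar>z - z'\<bar>"
proof -
  have "mean_field_map M W a B z - mean_field_map M W a B z'
      = (\<integral>x. (tanh (a * W x * z + B) - tanh (a * W x * z' + B)) * (a * W x) \<partial>M)"
    unfolding mean_field_map_def using integrable_mean_field_integrand by (simp add: left_diff_distrib)
  also have "\<dots> \<le> (\<integral>x. (a\<^sup>2 * \<bar>z - z'\<bar>) * (W x)\<^sup>2 \<partial>M)"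
  proof (rule integral_mono_AE)
    show "integrable M (\<lambda>x. (tanh (a * W x * z + B) - tanh (a * W x * z' + B)) * (a * W x))"
      using integrable_mean_field_integrand by (simp add: left_diff_distrib)
    show "integrable M (\<lambda>x. (a\<^sup>2 * \<bar>z - z'\<bar>) * (W x)\<^sup>2)" using integrable_W_sq by simp
    show "AE x in M. (tanh (a * W x * z + B) - tanh (a * W x * z' + B)) * (a * W x)
        \<le> (a\<^sup>2 * \<bar>z - z'\<bar>) * (W x)\<^sup>2"
      using W_nonneg
    proof eventually_elim
      case (elim x)
      have "\<bar>tanh (a * W x * z + B) - tanh (a * W x * z' + B)\<bar>
          \<le> \<bar>(a * W x * z + B) - (a * W x * z' + B)\<bar>"
        by (rule abs_tanh_diff_le)
      also have "\<dots> = a * W x * \<bar>z - z'\<bar>"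
        using elim assms by (simp add: abs_mult right_diff_distrib[symmetric])
      finally have "tanh (a * W x * z + B) - tanh (a * W x * z' + B) \<le> a * W x * \<bar>z - z'\<bar>"
        by linarith
      then have "(tanh (a * W x * z + B) - tanh (a * W x * z' + B)) * (a * W x)
          \<le> a * W x * \<bar>z - z'\<bar> * (a * W x)"
        using elim assms by (intro mult_right_mono) auto
      then show ?case by (simp add: power2_eq_square algebra_simps)
    qed
  qed
  also have "\<dots> = a\<^sup>2 * (\<integral>x. (W x)\<^sup>2 \<partial>M) * \<bar>z - z'\<bar>" by simp
  finally show ?thesis .
qed

lemma continuous_on_mean_field_map:
  assumes "a \<ge> 0" shows "continuous_on S (mean_field_map M W a B)"
proof (rule lipschitz_on_continuous_on[OF lipschitz_onI])
  fix z z'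
  show "dist (mean_field_map M W a B z) (mean_field_map M W a B z')
      \<le> a\<^sup>2 * (\<integral>x. (W x)\<^sup>2 \<partial>M) * dist z z'"
    using mean_field_map_lipschitz[OF assms, of B z z'] mean_field_map_lipschitz[OF assms, of B z' z]
    by (auto simp: dist_real_def abs_minus_commute)
qed simp

lemma ex1_pos_fixpoint:
  assumes "a > 0" "B > 0"
  shows "\<exists>!z. z > 0 \<and> z = mean_field_map M W a B z"
proof -
  define G where "G z = mean_field_map M W a B z - z" for z
  have "continuous_on {0 .. a * EW M W + 1} G"
    unfolding G_def using continuous_on_mean_field_map assms by (intro continuous_intros) auto
  moreover have G0: "G 0 > 0" unfolding G_def mean_field_map_at_0 using assms EW_pos by simp
  moreover have "G (a * EW M W + 1) < 0"
    unfolding G_def using mean_field_map_le[of a B "a * EW M W + 1"] assms by linarith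
  ultimately obtain z where "0 \<le> z" "G z = 0"
    using IVT2'[of G "a * EW M W + 1" 0 0] assms EW_pos by fastforce
  then have fix_z: "z > 0 \<and> z = mean_field_map M W a B z"
    using G0 by (cases "z = 0") (auto simp: G_def)
  have "y = z" if fix_y: "y > 0 \<and> y = mean_field_map M W a B y" for y
  proof (rule ccontr)
    assume "y \<noteq> z"
    then consider "y < z" | "z < y" by linarith
    then show False
    proof cases
      case 1
      then show False using mean_field_map_ratio_less[OF assms, of y z] fix_y fix_z by simp
    next
      case 2
      then show False using mean_field_map_ratio_less[OF assms, of z y] fix_y fix_z
        by (simp add: mult.commute)
    qed
  qed
  with fix_z show ?thesis by blast
qed

lemma mean_field_map_mono_field:
  assumes "a \<ge> 0" "B1 \<le> B2" shows "mean_field_map M W a B1 z \<le> mean_field_map M W a B2 z"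
  unfolding mean_field_map_def
proof (rule integral_mono_AE[OF integrable_mean_field_integrand integrable_mean_field_integrand])
  show "AE x in M. tanh (a * W x * z + B1) * (a * W x) \<le> tanh (a * W x * z + B2) * (a * W x)"
    using W_nonneg by eventually_elim (use assms in \<open>auto intro!: mult_right_mono\<close>)
qed

lemma pos_fixpoint_mono_field:
  assumes "a > 0" "0 < B1" "B1 \<le> B2"
    and "z1 > 0" "z1 = mean_field_map M W a B1 z1"
    and "z2 > 0" "z2 = mean_field_map M W a B2 z2"
  shows "z1 \<le> z2"
proof (rule ccontr)
  assume "\<not> z1 \<le> z2"
  then have "z2 * mean_field_map M W a B2 z1 < z1 * z2"
    using mean_field_map_ratio_less[of a B2 z2 z1] assms by simp
  moreover have "z2 * z1 \<le> z2 * mean_field_map M W a B2 z1"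
    using mean_field_map_mono_field[of a B1 B2 z1] assms by simp
  ultimately show False by (simp add: mult.commute)
qed

lemma integrable_gap_integrand: "integrable M (\<lambda>x. a * W x * (a * W x * \<epsilon> - tanh (a * W x * \<epsilon>)))"
proof -
  have "integrable M (\<lambda>x. (a\<^sup>2 * \<epsilon>) * (W x)\<^sup>2 - tanh (a * W x * \<epsilon> + 0) * (a * W x))"
    using integrable_W_sq integrable_mean_field_integrand[of a \<epsilon> 0]
    by (intro Bochner_Integration.integrable_diff) auto
  then show ?thesis by (simp add: power2_eq_square algebra_simps)
qed

lemma tanh_gap_pos: assumes "a > 0" "\<epsilon> > 0" shows "tanh_gap M W a \<epsilon> > 0"
proof -
  have "(\<integral>x. 0 \<partial>M) < tanh_gap M W a \<epsilon>" unfolding tanh_gap_def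
  proof (rule integral_less_AE[OF _ integrable_gap_integrand emeasure_W_pos_ne_0])
    show "AE x in M. x \<in> {x \<in> space M. 0 < W x} \<longrightarrow> 0 \<noteq> a * W x * (a * W x * \<epsilon> - tanh (a * W x * \<epsilon>))"
    proof (intro AE_I2 impI)
      fix x assume "x \<in> {x \<in> space M. 0 < W x}"
      then have "tanh (a * W x * \<epsilon>) < a * W x * \<epsilon>" using assms by (intro tanh_less_self) simp
      moreover have "0 < a * W x" using \<open>x \<in> _\<close> assms by simp
      ultimately show "0 \<noteq> a * W x * (a * W x * \<epsilon> - tanh (a * W x * \<epsilon>))" by force
    qed
    show "AE x in M. 0 \<le> a * W x * (a * W x * \<epsilon> - tanh (a * W x * \<epsilon>))"
      using W_nonneg by eventually_elim (use assms tanh_le_self in auto)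
  qed auto
  then show ?thesis by simp
qed

lemma fixpoint_gap_le:
  assumes "0 \<le> a\<^sub>c" "a\<^sub>c \<le> a" "0 \<le> \<epsilon>" "\<epsilon> \<le> z" "0 \<le> B" "z = mean_field_map M W a B z"
  shows "tanh_gap M W a\<^sub>c \<epsilon> \<le> (a\<^sup>2 * (\<integral>x. (W x)\<^sup>2 \<partial>M) - 1) * z + B * a * EW M W"
proof -
  let ?gap = "\<lambda>x. a\<^sub>c * W x * (a\<^sub>c * W x * \<epsilon> - tanh (a\<^sub>c * W x * \<epsilon>))"
  have "z \<le> (\<integral>x. (a\<^sup>2 * z) * (W x)\<^sup>2 + (a * B) * W x - ?gap x \<partial>M)"
    unfolding assms(6)[THEN arg_cong[where f="\<lambda>z. z \<le> _"]] mean_field_map_def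
  proof (rule integral_mono_AE[OF integrable_mean_field_integrand])
    show "integrable M (\<lambda>x. (a\<^sup>2 * z) * (W x)\<^sup>2 + (a * B) * W x - ?gap x)"
      using integrable_W_sq integrable_W integrable_gap_integrand by auto
    show "AE x in M. tanh (a * W x * z + B) * (a * W x) \<le> (a\<^sup>2 * z) * (W x)\<^sup>2 + (a * B) * W x - ?gap x"
      using W_nonneg
    proof eventually_elim
      case (elim x)
      have aW: "0 \<le> a\<^sub>c * W x" "a\<^sub>c * W x \<le> a * W x" "a\<^sub>c * W x * \<epsilon> \<le> a * W x * z"
        using elim assms by (auto intro!: mult_mono mult_right_mono)
      have "tanh (a * W x * z + B) \<le> tanh (a * W x * z) + B"
        using x_minus_tanh_mono[of "a * W x * z" "a * W x * z + B"] assms by simp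
      then have "tanh (a * W x * z + B) * (a * W x)
          \<le> (a * W x * z + B - (a * W x * z - tanh (a * W x * z))) * (a * W x)"
        using aW by (intro mult_right_mono) auto
      moreover have "?gap x \<le> a * W x * (a * W x * z - tanh (a * W x * z))"
        using aW x_minus_tanh_mono[OF aW(3)] tanh_le_self[of "a\<^sub>c * W x * \<epsilon>"] assms elim
        by (intro mult_mono) auto
      ultimately show ?case by (simp add: power2_eq_square algebra_simps)
    qed
  qed
  also have "\<dots> = a\<^sup>2 * z * (\<integral>x. (W x)\<^sup>2 \<partial>M) + a * B * EW M W - tanh_gap M W a\<^sub>c \<epsilon>"
    using integrable_W_sq integrable_W integrable_gap_integrand by (simp add: EW_def tanh_gap_def)
  finally show ?thesis by (simp add: algebra_simps)
qed

lemma betac_pos: "betac M W > 0"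
  unfolding betac_def nu_def using second_moment_pos EW_pos by simp

lemma alpha_pos: "\<beta> > 0 \<Longrightarrow> alpha M W \<beta> > 0"
  unfolding alpha_def using EW_pos by simp

lemma alpha_mono: "\<beta> \<le> \<beta>' \<Longrightarrow> alpha M W \<beta> \<le> alpha M W \<beta>'"
  unfolding alpha_def using EW_pos by (simp add: divide_right_mono)

lemma tendsto_alpha [tendsto_intros]:
  "(f \<longlongrightarrow> \<beta>) F \<Longrightarrow> ((\<lambda>x. alpha M W (f x)) \<longlongrightarrow> alpha M W \<beta>) F"
  unfolding alpha_def using EW_pos by (intro tendsto_intros) auto

lemma alpha_betac_sq: "(alpha M W (betac M W))\<^sup>2 * (\<integral>x. (W x)\<^sup>2 \<partial>M) = 1"
proof -
  have "(alpha M W (betac M W))\<^sup>2 = sinh (betac M W) / EW M W"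
    unfolding alpha_def using betac_pos EW_pos by simp
  also have "sinh (betac M W) = EW M W / (\<integral>x. (W x)\<^sup>2 \<partial>M)" by (simp add: betac_def nu_def)
  finally show ?thesis using EW_pos second_moment_pos by simp
qed

lemma zstar_fixpoint:
  assumes "\<beta> > 0" "B > 0"
  shows "zstar M W \<beta> B > 0 \<and> zstar M W \<beta> B = mean_field_map M W (alpha M W \<beta>) B (zstar M W \<beta> B)"
proof -
  have "zstar M W \<beta> B = (THE z. z > 0 \<and> z = mean_field_map M W (alpha M W \<beta>) B z)"
    unfolding zstar_def mean_field_map_def ..
  then show ?thesis using theI'[OF ex1_pos_fixpoint[OF alpha_pos[OF assms(1)] assms(2)]] by simp
qed

lemma zstar_mono_field:
  assumes "\<beta> > 0" "0 < B1" "B1 \<le> B2"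
  shows "zstar M W \<beta> B1 \<le> zstar M W \<beta> B2"
  using zstar_fixpoint[OF assms(1), of B1] zstar_fixpoint[OF assms(1), of B2] assms
  by (intro pos_fixpoint_mono_field[OF alpha_pos[OF assms(1)] assms(2,3)]) auto

lemma zstar_ge_imp_gap_le:
  assumes "betac M W \<le> \<beta>" "\<beta> \<le> betac M W + 1" "B > 0" "0 \<le> \<epsilon>" "\<epsilon> \<le> zstar M W \<beta> B"
  defines "K \<equiv> alpha M W (betac M W + 1) * EW M W"
  shows "tanh_gap M W (alpha M W (betac M W)) \<epsilon>
    \<le> ((alpha M W \<beta>)\<^sup>2 * (\<integral>x. (W x)\<^sup>2 \<partial>M) - 1) * K + B * K"
proof -
  define a where "a = alpha M W \<beta>"
  define z where "z = zstar M W \<beta> B"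
  have \<beta>_pos: "\<beta> > 0" using assms betac_pos by linarith
  have a_ge: "alpha M W (betac M W) \<le> a" unfolding a_def using assms(1) by (rule alpha_mono)
  have aEW_le: "a * EW M W \<le> K"
    unfolding a_def K_def using assms EW_pos by (intro mult_right_mono alpha_mono) auto
  have z: "z > 0" "z = mean_field_map M W a B z"
    using zstar_fixpoint[OF \<beta>_pos assms(3)] by (simp_all add: a_def z_def)
  have "z \<le> K" using mean_field_map_le[of a B z] z aEW_le alpha_pos[OF \<beta>_pos] by (simp add: a_def)
  moreover have "a\<^sup>2 * (\<integral>x. (W x)\<^sup>2 \<partial>M) - 1 \<ge> 0"
  proof -
    have "(alpha M W (betac M W))\<^sup>2 \<le> a\<^sup>2"
      using power_mono[OF a_ge, of 2] alpha_pos[OF betac_pos] by simp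
    then have "(alpha M W (betac M W))\<^sup>2 * (\<integral>x. (W x)\<^sup>2 \<partial>M) \<le> a\<^sup>2 * (\<integral>x. (W x)\<^sup>2 \<partial>M)"
      using second_moment_pos by (intro mult_right_mono) auto
    then show ?thesis unfolding alpha_betac_sq by simp
  qed
  ultimately have "(a\<^sup>2 * (\<integral>x. (W x)\<^sup>2 \<partial>M) - 1) * z \<le> (a\<^sup>2 * (\<integral>x. (W x)\<^sup>2 \<partial>M) - 1) * K"
    by (rule mult_left_mono)
  moreover have "B * a * EW M W \<le> B * K"
    using mult_left_mono[OF aEW_le, of B] assms(3) by (simp add: mult.assoc)
  moreover have "tanh_gap M W (alpha M W (betac M W)) \<epsilon>
      \<le> (a\<^sup>2 * (\<integral>x. (W x)\<^sup>2 \<partial>M) - 1) * z + B * a * EW M W"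
    using alpha_pos[OF betac_pos] assms(3-5) z(2)
    by (intro fixpoint_gap_le[OF _ a_ge]) (auto simp: z_def)
  ultimately show ?thesis unfolding a_def by linarith
qed

lemma tendsto_zstar_zero:
  assumes "(b \<longlongrightarrow> betac M W) F" "(B \<longlongrightarrow> 0) F" "\<forall>\<^sub>F x in F. betac M W \<le> b x \<and> 0 < B x"
  shows "((\<lambda>x. zstar M W (b x) (B x)) \<longlongrightarrow> 0) F"
proof (rule order_tendstoI)
  fix y :: real assume "y < 0"
  show "\<forall>\<^sub>F x in F. y < zstar M W (b x) (B x)"
    using assms(3)
  proof eventually_elim
    case (elim x)
    then have "b x > 0" using betac_pos by linarith
    then show ?case using zstar_fixpoint[of "b x" "B x"] elim \<open>y < 0\<close> by auto
  qed
next
  fix \<epsilon> :: real assume "0 < \<epsilon>"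
  define K where "K = alpha M W (betac M W + 1) * EW M W"
  define bound where "bound x = ((alpha M W (b x))\<^sup>2 * (\<integral>x. (W x)\<^sup>2 \<partial>M) - 1) * K + B x * K" for x
  have "(bound \<longlongrightarrow> ((alpha M W (betac M W))\<^sup>2 * (\<integral>x. (W x)\<^sup>2 \<partial>M) - 1) * K + 0 * K) F"
    unfolding bound_def by (intro tendsto_intros assms)
  then have "(bound \<longlongrightarrow> 0) F" by (simp add: alpha_betac_sq)
  then have "\<forall>\<^sub>F x in F. bound x < tanh_gap M W (alpha M W (betac M W)) \<epsilon>"
    by (rule order_tendstoD) (rule tanh_gap_pos[OF alpha_pos[OF betac_pos] \<open>0 < \<epsilon>\<close>])
  moreover have "\<forall>\<^sub>F x in F. b x < betac M W + 1"
    using assms(1) by (rule order_tendstoD) simp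
  ultimately show "\<forall>\<^sub>F x in F. zstar M W (b x) (B x) < \<epsilon>"
    using assms(3)
  proof eventually_elim
    case (elim x)
    show ?case
    proof (rule ccontr)
      assume "\<not> zstar M W (b x) (B x) < \<epsilon>"
      then have "tanh_gap M W (alpha M W (betac M W)) \<epsilon> \<le> bound x"
        using zstar_ge_imp_gap_le[of "b x" "B x" \<epsilon>] elim \<open>0 < \<epsilon>\<close> by (simp add: bound_def K_def)
      with elim show False by linarith
    qed
  qed
qed

lemma zstar_tendsto_zstar0:
  assumes "\<beta> > 0" shows "(zstar M W \<beta> \<longlongrightarrow> zstar0 M W \<beta>) (at_right 0)"
proof -
  have "(zstar M W \<beta> \<longlongrightarrow> Inf (zstar M W \<beta> ` ({0<..} \<inter> UNIV))) (at 0 within ({0<..} \<inter> UNIV))"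
    using zstar_mono_field[OF assms] zstar_fixpoint[OF assms]
    by (intro Lim_right_bound[where K=0]) (auto intro: less_imp_le)
  then have lim: "(zstar M W \<beta> \<longlongrightarrow> Inf (zstar M W \<beta> ` {0<..})) (at_right 0)" by simp
  then show ?thesis unfolding zstar0_def using tendsto_Lim[OF _ lim] by simp
qed

lemma zstar0_bounds:
  assumes "\<beta> > 0" "B > 0" shows "0 \<le> zstar0 M W \<beta>" "zstar0 M W \<beta> \<le> zstar M W \<beta> B"
proof -
  have "\<forall>\<^sub>F c in at_right 0. 0 \<le> zstar M W \<beta> c"
    using eventually_at_right_less[of 0]
  proof eventually_elim
    case (elim c)
    show ?case using zstar_fixpoint[OF assms(1) elim] by simp
  qed
  then show "0 \<le> zstar0 M W \<beta>"
    by (intro tendsto_lowerbound[OF zstar_tendsto_zstar0[OF assms(1)]]) auto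
  have "\<forall>\<^sub>F c in at_right 0. zstar M W \<beta> c \<le> zstar M W \<beta> B"
    using eventually_at_right_real[OF assms(2)]
  proof eventually_elim
    case (elim c)
    then show ?case by (intro zstar_mono_field[OF assms(1)]) auto
  qed
  then show "zstar0 M W \<beta> \<le> zstar M W \<beta> B"
    by (intro tendsto_upperbound[OF zstar_tendsto_zstar0[OF assms(1)]]) auto
qed

end

theorem mainTheorem5:
  fixes M :: "'a measure" and W :: "'a \<Rightarrow> real"
    and \<beta> B :: "nat \<Rightarrow> real"
  assumes "prob_space M"
    and "W \<in> borel_measurable M"
    and "AE x in M. W x \<ge> 0"
    and "integrable M (\<lambda>x. (W x)\<^sup>2)"
    and "EW M W > 0"
    and "decseq \<beta>" and "decseq B"
    and "\<And>l. \<beta> l \<ge> betac M W"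
    and "\<And>l. B l > 0"
    and "\<beta> \<longlonglongrightarrow> betac M W"
    and "B \<longlonglongrightarrow> 0"
  shows "((\<lambda>l. zstar M W (\<beta> l) (B l)) \<longlonglongrightarrow> 0)
    \<and> ((\<lambda>b. zstar M W (betac M W) b) \<longlongrightarrow> 0) (at_right 0)
    \<and> ((\<lambda>b. zstar0 M W b) \<longlongrightarrow> 0) (at_right (betac M W))"
proof (intro conjI)
  interpret weight_rv M W
    using assms(1-5) by (simp add: weight_rv_def weight_rv_axioms_def)
  show "(\<lambda>l. zstar M W (\<beta> l) (B l)) \<longlonglongrightarrow> 0"
    using assms(8-11) by (intro tendsto_zstar_zero) auto
  show "((\<lambda>b. zstar M W (betac M W) b) \<longlongrightarrow> 0) (at_right 0)"
    by (rule tendsto_zstar_zero[OF tendsto_const tendsto_ident_at]) (simp add: eventually_at_right_less)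
  let ?\<beta>\<^sub>c = "betac M W"
  have "((\<lambda>b. b - ?\<beta>\<^sub>c) \<longlongrightarrow> ?\<beta>\<^sub>c - ?\<beta>\<^sub>c) (at_right ?\<beta>\<^sub>c)"
    by (intro tendsto_diff tendsto_ident_at tendsto_const)
  then have "((\<lambda>b. b - ?\<beta>\<^sub>c) \<longlongrightarrow> 0) (at_right ?\<beta>\<^sub>c)" by simp
  moreover have "\<forall>\<^sub>F b in at_right ?\<beta>\<^sub>c. ?\<beta>\<^sub>c \<le> b \<and> 0 < b - ?\<beta>\<^sub>c"
    using eventually_at_right_less[of ?\<beta>\<^sub>c] by eventually_elim simp
  ultimately have upper: "((\<lambda>b. zstar M W b (b - ?\<beta>\<^sub>c)) \<longlongrightarrow> 0) (at_right ?\<beta>\<^sub>c)"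
    by (rule tendsto_zstar_zero[OF tendsto_ident_at])
  have "\<forall>\<^sub>F b in at_right ?\<beta>\<^sub>c. 0 \<le> zstar0 M W b \<and> zstar0 M W b \<le> zstar M W b (b - ?\<beta>\<^sub>c)"
    using eventually_at_right_less[of ?\<beta>\<^sub>c]
  proof eventually_elim
    case (elim b)
    then show ?case using zstar0_bounds[of b "b - ?\<beta>\<^sub>c"] betac_pos by simp
  qed
  then show "((\<lambda>b. zstar0 M W b) \<longlongrightarrow> 0) (at_right ?\<beta>\<^sub>c)"
    by (intro tendsto_sandwich[OF _ _ tendsto_const upper]) (auto elim: eventually_mono)
qed

end
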